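(* Let $k\ge 1$ be an integer, let $g,h$ be any two encoders and $\mathcal D$ any task distribution. With the $k$-negative losses defined below, $$L^{(k)}_{\mathrm{con}}(g;\mathcal D)\le \alpha L^{(k)}_{\mathrm{con}}(h;\mathcal D)+L^{(k)}_{\mathrm{dis}}(g;h,\mathcal D)+\beta,$$ $$L^{(k)}_{\mathrm{con}}(g;\mathcal D)\ge \alpha L^{(k)}_{\mathrm{con}}(h;\mathcal D)+L^{(k)}_{\mathrm{dis}}(g;h,\mathcal D)+\beta',$$ where $\alpha=\frac{2e^2}{k+e^2}$, $\beta=2-\alpha+\alpha\log\frac{\alpha}{2}$ and $\beta'=-\alpha\log(1+ke^2)-\frac{2ke^2}{1+ke^2}$.
   Context: Let $\mathcal X$ be a measurable input space and $d\ge 1$. An encoder is a measurable map $f:\mathcal X\to\mathbb R^d$ with $\|f(x)\|_2=1$ for all $x$. A task distribution $\mathcal D$ consists of a probability distribution $\mu$ on a countable set of classes together with, for each class $c$, a probability distribution $\mathcal D_c$ on $\mathcal X$. $k$-negative sampling scheme: $c^+,c_1^-,\dots,c_k^-\sim\mu$ independently; given $c^+$, $x,x^+$ are drawn i.i.d. from $\mathcal D_{c^+}$; independently, $x_i^-\sim\mathcal D_{c_i^-}$ for $i=1,\dots,k$. For $\mathbf v\in\mathbb R^k$ let $\ell(\mathbf v)=\log\big(1+\sum_{i=1}^k e^{-v_i}\big)$. The $k$-negative contrastive loss is $L^{(k)}_{\mathrm{con}}(f;\mathcal D)=\mathbb E\big[\ell\big((f(x)^\top(f(x^+)-f(x_i^-)))_{i=1}^k\big)\big]$.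 Let $\mathbf p(f;x,x^+,x_1^-,\dots,x_k^-)=\mathrm{softmax}\big(f(x)^\top f(x^+),f(x)^\top f(x_1^-),\dots,f(x)^\top f(x_k^-)\big)\in\mathbb R^{k+1}$, and for encoders $g,h$ let $L^{(k)}_{\mathrm{dis}}(g;h,\mathcal D)=\mathbb E\big[-\mathbf p(h;x,x^+,x_1^-,\dots,x_k^-)\cdot\log\mathbf p(g;x,x^+,x_1^-,\dots,x_k^-)\big]$ under the same sampling scheme. *)

theory Defs
  imports "HOL-Probability.Probability"
begin

definition encoder :: "'x measure \<Rightarrow> ('x \<Rightarrow> real ^ 'd) \<Rightarrow> bool" where
  "encoder M f \<longleftrightarrow> f \<in> M \<rightarrow>\<^sub>M borel \<and> (\<forall>x\<in>space M. norm (f x) = 1)"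

definition task_distribution :: "'x measure \<Rightarrow> 'c pmf \<Rightarrow> ('c \<Rightarrow> 'x measure) \<Rightarrow> bool" where
  "task_distribution M \<mu> D \<longleftrightarrow> (\<forall>c. prob_space (D c) \<and> sets (D c) = sets M)"

text \<open>k-negative sampling scheme: c+, c1-,...,ck- iid from mu; x, x+ iid from D c+;
  x_i- from D c_i-, independently. Outcome: ((x, x+), (i \<mapsto> x_i-)).\<close>
definition sampling :: "'x measure \<Rightarrow> 'c pmf \<Rightarrow> ('c \<Rightarrow> 'x measure) \<Rightarrow> nat
    \<Rightarrow> (('x \<times> 'x) \<times> (nat \<Rightarrow> 'x)) measure" where
  "sampling M \<mu> D k =
     measure_pmf (pair_pmf \<mu> (Pi_pmf {..<k} undefined (\<lambda>_. \<mu>))) \<bind>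
       (\<lambda>(cp, cn). (D cp \<Otimes>\<^sub>M D cp) \<Otimes>\<^sub>M (\<Pi>\<^sub>M i\<in>{..<k}. D (cn i)))"

definition ell :: "nat \<Rightarrow> (nat \<Rightarrow> real) \<Rightarrow> real" where
  "ell k v = ln (1 + (\<Sum>i<k. exp (- v i)))"

definition L_con :: "'x measure \<Rightarrow> 'c pmf \<Rightarrow> ('c \<Rightarrow> 'x measure) \<Rightarrow> nat
    \<Rightarrow> ('x \<Rightarrow> real ^ 'd) \<Rightarrow> real" where
  "L_con M \<mu> D k f =
     (\<integral>((x, xp), xn). ell k (\<lambda>i. f x \<bullet> (f xp - f (xn i))) \<partial>sampling M \<mu> D k)"

definition logits :: "('x \<Rightarrow> real ^ 'd) \<Rightarrow> 'x \<Rightarrow> 'x \<Rightarrow> (nat \<Rightarrow> 'x) \<Rightarrow> nat \<Rightarrow> real" where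
  "logits f x xp xn j = (if j = 0 then f x \<bullet> f xp else f x \<bullet> f (xn (j - 1)))"

definition softmax_p :: "nat \<Rightarrow> ('x \<Rightarrow> real ^ 'd) \<Rightarrow> 'x \<Rightarrow> 'x \<Rightarrow> (nat \<Rightarrow> 'x) \<Rightarrow> nat \<Rightarrow> real" where
  "softmax_p k f x xp xn j =
     exp (logits f x xp xn j) / (\<Sum>l\<le>k. exp (logits f x xp xn l))"

definition L_dis :: "'x measure \<Rightarrow> 'c pmf \<Rightarrow> ('c \<Rightarrow> 'x measure) \<Rightarrow> nat
    \<Rightarrow> ('x \<Rightarrow> real ^ 'd) \<Rightarrow> ('x \<Rightarrow> real ^ 'd) \<Rightarrow> real" where
  "L_dis M \<mu> D k g h =
     (\<integral>((x, xp), xn). - (\<Sum>j\<le>k. softmax_p k h x xp xn j * ln (softmax_p k g x xp xn j))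
        \<partial>sampling M \<mu> D k)"

end

theory Submission
  imports Defs
begin

text \<open>
  Fix a sample and write \<open>a\<close>, \<open>b\<close> for the logits of \<open>g\<close>, \<open>h\<close> (index 0 the positive pair),
  \<open>q = softmax a\<close>, \<open>p = softmax b\<close>. The contrastive loss of the sample is \<open>-ln q\<^sub>0\<close>, and
  \<open>-ln q\<^sub>0 - CE(p, q) = \<Sum>\<^sub>j p\<^sub>j (a\<^sub>j - a\<^sub>0)\<close>, which lies in \<open>[-2(1 - p\<^sub>0), 2(1 - p\<^sub>0)]\<close> because
  unit-norm embeddings have logit gaps at most 2. So the loss of \<open>g\<close> minus \<open>\<alpha>\<close> times the loss
  \<open>-ln p\<^sub>0\<close> of \<open>h\<close> minus the distillation term is \<open>S + \<alpha> ln p\<^sub>0\<close> with \<open>|S| \<le> 2(1 - p\<^sub>0)\<close>.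
  Maximising \<open>2(1 - p) + \<alpha> ln p\<close> over \<open>p\<close> gives \<open>\<beta>\<close>, and \<open>p\<^sub>0 \<ge> 1/(1 + k e\<^sup>2)\<close> gives \<open>\<beta>'\<close>.
  All per-sample losses are bounded, so the pointwise sandwich integrates. Neither \<open>k \<ge> 1\<close>
  nor the particular value of \<open>\<alpha>\<close> is needed: any \<open>\<alpha> > 0\<close> works.
\<close>

definition softmax :: "nat \<Rightarrow> (nat \<Rightarrow> real) \<Rightarrow> nat \<Rightarrow> real" where
  "softmax k a j = exp (a j) / (\<Sum>l\<le>k. exp (a l))"

definition cross_entropy :: "nat \<Rightarrow> (nat \<Rightarrow> real) \<Rightarrow> (nat \<Rightarrow> real) \<Rightarrow> real" where
  "cross_entropy k p q = - (\<Sum>j\<le>k. p j * ln (q j))"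

lemma sum_exp_pos: "0 < (\<Sum>l\<le>k. exp (a l))" for k :: nat and a :: "nat \<Rightarrow> real"
  by (intro sum_pos) auto

lemma softmax_pos: "0 < softmax k a j"
  unfolding softmax_def using sum_exp_pos by simp

lemma sum_softmax: "(\<Sum>j\<le>k. softmax k a j) = 1"
  unfolding softmax_def using sum_exp_pos[of a k]
  by (simp add: sum_divide_distrib[symmetric])

lemma ln_softmax: "ln (softmax k a j) = a j - ln (\<Sum>l\<le>k. exp (a l))"
  unfolding softmax_def using sum_exp_pos[of a k] by (simp add: ln_div)

lemma ell_gaps_eq_neg_ln_softmax: "ell k (\<lambda>i. a 0 - a (Suc i)) = - ln (softmax k a 0)"
proof -
  have "1 + (\<Sum>i<k. exp (- (a 0 - a (Suc i)))) = 1 / softmax k a 0"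
    unfolding softmax_def
    by (simp add: sum.atMost_shift add_divide_distrib sum_divide_distrib exp_diff)
  then show ?thesis
    unfolding ell_def using softmax_pos[of k a 0] by (simp add: ln_div)
qed

lemma cross_entropy_softmax:
  assumes "(\<Sum>j\<le>k. p j) = 1"
  shows "cross_entropy k p (softmax k a) = ln (\<Sum>l\<le>k. exp (a l)) - (\<Sum>j\<le>k. p j * a j)"
proof -
  have "cross_entropy k p (softmax k a) = (\<Sum>j\<le>k. p j) * ln (\<Sum>l\<le>k. exp (a l)) - (\<Sum>j\<le>k. p j * a j)"
    unfolding cross_entropy_def ln_softmax
    by (simp add: sum_distrib_right sum_subtractf right_diff_distrib)
  then show ?thesis using assms by simp
qed

lemma neg_ln_softmax_minus_cross_entropy:
  assumes "(\<Sum>j\<le>k. p j) = 1"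
  shows "- ln (softmax k a 0) - cross_entropy k p (softmax k a) = (\<Sum>j\<le>k. p j * (a j - a 0))"
  using assms
  by (simp add: cross_entropy_softmax ln_softmax right_diff_distrib sum_subtractf
      flip: sum_distrib_right)

lemma abs_sum_weighted_gaps_le:
  fixes p a :: "nat \<Rightarrow> real"
  assumes "\<forall>j\<le>k. 0 \<le> p j" and "(\<Sum>j\<le>k. p j) = 1" and "\<forall>j\<le>k. \<bar>a j - a 0\<bar> \<le> r"
  shows "\<bar>\<Sum>j\<le>k. p j * (a j - a 0)\<bar> \<le> r * (1 - p 0)"
proof -
  have "\<bar>\<Sum>j\<le>k. p j * (a j - a 0)\<bar> \<le> (\<Sum>i<k. p (Suc i) * \<bar>a (Suc i) - a 0\<bar>)"
    using sum_abs[of "\<lambda>i. p (Suc i) * (a (Suc i) - a 0)" "{..<k}"] assms(1)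
    by (simp add: sum.atMost_shift abs_mult)
  also have "\<dots> \<le> (\<Sum>i<k. p (Suc i) * r)"
    using assms(1,3) by (intro sum_mono mult_left_mono) auto
  also have "\<dots> = r * (1 - p 0)"
    using assms(2) by (simp add: sum.atMost_shift mult.commute flip: sum_distrib_left)
  finally show ?thesis .
qed

lemma softmax_0_ge:
  assumes "\<forall>j\<le>k. a j \<le> a 0 + r"
  shows "1 / (1 + real k * exp r) \<le> softmax k a 0"
proof -
  have "(\<Sum>i<k. exp (a (Suc i))) \<le> (\<Sum>i<k. exp (a 0) * exp r)"
    using assms by (intro sum_mono) (auto simp flip: exp_add)
  then have "(\<Sum>l\<le>k. exp (a l)) \<le> exp (a 0) * (1 + real k * exp r)"
    by (simp add: sum.atMost_shift algebra_simps)
  then have "exp (a 0) / (exp (a 0) * (1 + real k * exp r)) \<le> softmax k a 0"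
    unfolding softmax_def using sum_exp_pos[of a k]
    by (intro divide_left_mono) (auto simp: add_pos_nonneg)
  then show ?thesis by simp
qed

lemma neg_ln_softmax_0_bounds:
  assumes "\<forall>j\<le>k. a j \<le> a 0 + r"
  shows "0 \<le> - ln (softmax k a 0)" and "- ln (softmax k a 0) \<le> ln (1 + real k * exp r)"
proof -
  have "0 \<le> (\<Sum>i<k. softmax k a (Suc i))"
    by (intro sum_nonneg) (simp add: less_imp_le softmax_pos)
  then have "softmax k a 0 \<le> 1"
    using sum_softmax[of k a] by (simp add: sum.atMost_shift)
  then show "0 \<le> - ln (softmax k a 0)" using softmax_pos[of k a 0] by simp
  have "0 < 1 + real k * exp r" by (simp add: add_pos_nonneg)
  then have "ln (1 / (1 + real k * exp r)) \<le> ln (softmax k a 0)"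
    using softmax_0_ge[OF assms] softmax_pos[of k a 0] by (subst ln_le_cancel_iff) auto
  then show "- ln (softmax k a 0) \<le> ln (1 + real k * exp r)"
    using \<open>0 < 1 + real k * exp r\<close> by (simp add: ln_div)
qed

lemma mult_ln_minus_le:
  fixes \<alpha> r p :: real
  assumes "0 < \<alpha>" "0 < r" "0 < p"
  shows "\<alpha> * ln p - r * p \<le> \<alpha> * ln (\<alpha> / r) - \<alpha>"
proof -
  have "ln (p * r / \<alpha>) \<le> p * r / \<alpha> - 1"
    using assms by (intro ln_le_minus_one) simp
  then have "\<alpha> * ln (p * r / \<alpha>) \<le> \<alpha> * (p * r / \<alpha> - 1)"
    using assms(1) by (intro mult_left_mono) auto
  moreover have "ln (p * r / \<alpha>) = ln p - ln (\<alpha> / r)"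
    using assms by (simp add: ln_div ln_mult)
  ultimately show ?thesis
    using assms(1) by (simp add: algebra_simps)
qed

lemma neg_ln_softmax_sandwich:
  fixes a b :: "nat \<Rightarrow> real" and \<alpha> r :: real
  assumes "0 < \<alpha>" "0 < r" "\<forall>j\<le>k. \<bar>a j - a 0\<bar> \<le> r" "\<forall>j\<le>k. b j \<le> b 0 + r"
  defines "ce \<equiv> cross_entropy k (softmax k b) (softmax k a)"
  shows "- ln (softmax k a 0) \<le> \<alpha> * - ln (softmax k b 0) + ce + (r - \<alpha> + \<alpha> * ln (\<alpha> / r))"
    and "\<alpha> * - ln (softmax k b 0) + ce
           + (- \<alpha> * ln (1 + real k * exp r) - r * real k * exp r / (1 + real k * exp r))
         \<le> - ln (softmax k a 0)"
proof -
  define p where "p = softmax k b"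
  define S where "S = (\<Sum>j\<le>k. p j * (a j - a 0))"
  have gap: "- ln (softmax k a 0) - ce = S"
    unfolding ce_def S_def p_def by (intro neg_ln_softmax_minus_cross_entropy sum_softmax)
  have S_abs: "\<bar>S\<bar> \<le> r * (1 - p 0)"
    unfolding S_def p_def
    by (intro abs_sum_weighted_gaps_le) (auto simp: less_imp_le softmax_pos sum_softmax assms(3))
  have p0_pos: "0 < p 0" unfolding p_def by (rule softmax_pos)
  show "- ln (softmax k a 0) \<le> \<alpha> * - ln (softmax k b 0) + ce + (r - \<alpha> + \<alpha> * ln (\<alpha> / r))"
    using gap S_abs mult_ln_minus_le[OF assms(1,2) p0_pos] unfolding p_def by argo
  have "0 < 1 + real k * exp r" by (simp add: add_pos_nonneg)
  have p0_ge: "1 / (1 + real k * exp r) \<le> p 0"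
    unfolding p_def by (rule softmax_0_ge[OF assms(4)])
  then have "- ln (1 + real k * exp r) \<le> ln (p 0)"
    using p0_pos \<open>0 < 1 + real k * exp r\<close> by (subst (asm) ln_le_cancel_iff[symmetric]) (auto simp: ln_div)
  then have "- \<alpha> * ln (1 + real k * exp r) \<le> \<alpha> * ln (p 0)"
    using mult_left_mono[of _ _ \<alpha>] assms(1) by fastforce
  moreover have "r * (1 - p 0) \<le> r * real k * exp r / (1 + real k * exp r)"
  proof -
    have "1 - p 0 \<le> 1 - 1 / (1 + real k * exp r)" using p0_ge by simp
    also have "\<dots> = real k * exp r / (1 + real k * exp r)"
      using \<open>0 < 1 + real k * exp r\<close> by (simp add: field_simps)
    finally show ?thesis
      using mult_left_mono[of _ _ r] assms(2) by (fastforce simp: mult.assoc)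
  qed
  ultimately show "\<alpha> * - ln (softmax k b 0) + ce
           + (- \<alpha> * ln (1 + real k * exp r) - r * real k * exp r / (1 + real k * exp r))
         \<le> - ln (softmax k a 0)"
    using gap S_abs unfolding p_def by argo
qed

lemma softmax_p_eq_softmax: "softmax_p k f x xp xn = softmax k (logits f x xp xn)"
  by (rule ext) (simp add: softmax_p_def softmax_def)

definition con_loss :: "nat \<Rightarrow> ('x \<Rightarrow> real ^ 'd) \<Rightarrow> ('x \<times> 'x) \<times> (nat \<Rightarrow> 'x) \<Rightarrow> real" where
  "con_loss k f = (\<lambda>((x, xp), xn). - ln (softmax_p k f x xp xn 0))"

definition dis_loss ::
    "nat \<Rightarrow> ('x \<Rightarrow> real ^ 'd) \<Rightarrow> ('x \<Rightarrow> real ^ 'd) \<Rightarrow> ('x \<times> 'x) \<times> (nat \<Rightarrow> 'x) \<Rightarrow> real" where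
  "dis_loss k g h = (\<lambda>((x, xp), xn). cross_entropy k (softmax_p k h x xp xn) (softmax_p k g x xp xn))"

lemma L_con_eq_integral_con_loss: "L_con M \<mu> D k f = (\<integral>\<omega>. con_loss k f \<omega> \<partial>sampling M \<mu> D k)"
proof -
  have "ell k (\<lambda>i. f x \<bullet> (f xp - f (xn i))) = - ln (softmax_p k f x xp xn 0)" for x xp xn
  proof -
    have "(\<lambda>i. f x \<bullet> (f xp - f (xn i))) = (\<lambda>i. logits f x xp xn 0 - logits f x xp xn (Suc i))"
      by (simp add: logits_def inner_diff_right)
    then show ?thesis by (simp add: ell_gaps_eq_neg_ln_softmax softmax_p_eq_softmax)
  qed
  then show ?thesis unfolding L_con_def con_loss_def by simp
qed

lemma L_dis_eq_integral_dis_loss: "L_dis M \<mu> D k g h = (\<integral>\<omega>. dis_loss k g h \<omega> \<partial>sampling M \<mu> D k)"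
  unfolding L_dis_def dis_loss_def cross_entropy_def ..

definition sample_space :: "'x measure \<Rightarrow> nat \<Rightarrow> (('x \<times> 'x) \<times> (nat \<Rightarrow> 'x)) measure" where
  "sample_space M k = (M \<Otimes>\<^sub>M M) \<Otimes>\<^sub>M (\<Pi>\<^sub>M i\<in>{..<k}. M)"

lemma logit_gaps_le:
  assumes "encoder M f" and "((x, xp), xn) \<in> space (sample_space M k)"
  shows "\<forall>j\<le>k. \<bar>logits f x xp xn j - logits f x xp xn 0\<bar> \<le> 2"
proof (intro allI impI)
  fix j assume "j \<le> k"
  have samples: "x \<in> space M" "xp \<in> space M" "\<And>i. i < k \<Longrightarrow> xn i \<in> space M"
    using assms(2) by (auto simp: sample_space_def space_pair_measure space_PiM)
  have inner_le: "\<bar>f x \<bullet> f y\<bar> \<le> 1" if "y \<in> space M" for y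
    using Cauchy_Schwarz_ineq2[of "f x" "f y"] assms(1) samples(1) that
    unfolding encoder_def by simp
  show "\<bar>logits f x xp xn j - logits f x xp xn 0\<bar> \<le> 2"
  proof (cases "j = 0")
    case False
    with \<open>j \<le> k\<close> have "xn (j - 1) \<in> space M" by (intro samples(3)) simp
    then show ?thesis
      using False inner_le[of xp] inner_le[of "xn (j - 1)"] samples(2)
      by (simp add: logits_def abs_le_iff)
  qed (simp add: logits_def)
qed

lemma con_loss_sandwich:
  assumes "encoder M g" "encoder M h" "\<omega> \<in> space (sample_space M k)" "0 < \<alpha>"
  shows "con_loss k g \<omega> \<le> \<alpha> * con_loss k h \<omega> + dis_loss k g h \<omega> + (2 - \<alpha> + \<alpha> * ln (\<alpha> / 2))"
    and "\<alpha> * con_loss k h \<omega> + dis_loss k g h \<omega>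
           + (- \<alpha> * ln (1 + real k * exp 2) - 2 * real k * exp 2 / (1 + real k * exp 2))
         \<le> con_loss k g \<omega>"
proof -
  obtain x xp xn where \<omega>: "\<omega> = ((x, xp), xn)" by (metis prod.collapse)
  have "\<forall>j\<le>k. \<bar>logits g x xp xn j - logits g x xp xn 0\<bar> \<le> 2"
    and "\<forall>j\<le>k. logits h x xp xn j \<le> logits h x xp xn 0 + 2"
    using logit_gaps_le[OF assms(1) assms(3)[unfolded \<omega>]]
      logit_gaps_le[OF assms(2) assms(3)[unfolded \<omega>]] by (auto simp: abs_le_iff)
  note sandwich = neg_ln_softmax_sandwich[OF assms(4) _ this]
  show "con_loss k g \<omega> \<le> \<alpha> * con_loss k h \<omega> + dis_loss k g h \<omega> + (2 - \<alpha> + \<alpha> * ln (\<alpha> / 2))"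
    using sandwich(1) unfolding \<omega> con_loss_def dis_loss_def softmax_p_eq_softmax by simp
  show "\<alpha> * con_loss k h \<omega> + dis_loss k g h \<omega>
           + (- \<alpha> * ln (1 + real k * exp 2) - 2 * real k * exp 2 / (1 + real k * exp 2))
         \<le> con_loss k g \<omega>"
    using sandwich(2) unfolding \<omega> con_loss_def dis_loss_def softmax_p_eq_softmax by simp
qed

lemma abs_con_loss_le:
  assumes "encoder M f" "\<omega> \<in> space (sample_space M k)"
  shows "\<bar>con_loss k f \<omega>\<bar> \<le> ln (1 + real k * exp 2)"
proof -
  obtain x xp xn where \<omega>: "\<omega> = ((x, xp), xn)" by (metis prod.collapse)
  have "\<forall>j\<le>k. logits f x xp xn j \<le> logits f x xp xn 0 + 2"
    using logit_gaps_le[OF assms[unfolded \<omega>]] by (auto simp: abs_le_iff)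
  from neg_ln_softmax_0_bounds[OF this] show ?thesis
    unfolding \<omega> con_loss_def softmax_p_eq_softmax by simp
qed

lemma abs_dis_loss_le:
  assumes "encoder M g" "\<omega> \<in> space (sample_space M k)"
  shows "\<bar>dis_loss k g h \<omega>\<bar> \<le> ln (1 + real k * exp 2) + 2"
proof -
  obtain x xp xn where \<omega>: "\<omega> = ((x, xp), xn)" by (metis prod.collapse)
  define a where "a = logits g x xp xn"
  define p where "p = softmax k (logits h x xp xn)"
  have "\<forall>j\<le>k. \<bar>a j - a 0\<bar> \<le> 2"
    using logit_gaps_le[OF assms[unfolded \<omega>]] unfolding a_def .
  then have "\<bar>\<Sum>j\<le>k. p j * (a j - a 0)\<bar> \<le> 2 * (1 - p 0)"
    unfolding p_def by (intro abs_sum_weighted_gaps_le) (auto simp: less_imp_le softmax_pos sum_softmax)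
  moreover have "0 < p 0" unfolding p_def by (rule softmax_pos)
  moreover have "dis_loss k g h \<omega> = - ln (softmax k a 0) - (\<Sum>j\<le>k. p j * (a j - a 0))"
    using neg_ln_softmax_minus_cross_entropy[of p k a] sum_softmax
    unfolding \<omega> dis_loss_def softmax_p_eq_softmax a_def p_def by simp
  moreover have "\<bar>con_loss k g \<omega>\<bar> \<le> ln (1 + real k * exp 2)"
    by (rule abs_con_loss_le[OF assms])
  ultimately show ?thesis
    unfolding \<omega> con_loss_def softmax_p_eq_softmax a_def by simp
qed

lemma measurable_softmax_p:
  fixes f :: "'x \<Rightarrow> real ^ 'd"
  assumes f[measurable]: "f \<in> M \<rightarrow>\<^sub>M borel" and "j \<le> k"
  shows "(\<lambda>((x, xp), xn). softmax_p k f x xp xn j) \<in> borel_measurable (sample_space M k)"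
proof -
  have [measurable]: "(\<lambda>\<omega>. logits f (fst (fst \<omega>)) (snd (fst \<omega>)) (snd \<omega>) l)
      \<in> borel_measurable (sample_space M k)" if "l \<le> k" for l
  proof (cases l)
    case (Suc i)
    with that have "i \<in> {..<k}" by simp
    with Suc show ?thesis
      unfolding logits_def sample_space_def by simp measurable
  qed (simp add: logits_def sample_space_def)
  show ?thesis
    using assms(2) unfolding softmax_p_def case_prod_beta' by measurable
qed

lemma measurable_con_loss:
  assumes "f \<in> M \<rightarrow>\<^sub>M borel"
  shows "con_loss k f \<in> borel_measurable (sample_space M k)"
proof -
  note [measurable] = measurable_softmax_p[OF assms le0, unfolded case_prod_beta']
  show ?thesis unfolding con_loss_def case_prod_beta' by measurable
qed

lemma measurable_dis_loss:
  assumes "g \<in> M \<rightarrow>\<^sub>M borel" "h \<in> M \<rightarrow>\<^sub>M borel"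
  shows "dis_loss k g h \<in> borel_measurable (sample_space M k)"
proof -
  note [measurable] = measurable_softmax_p[OF assms(1), unfolded case_prod_beta']
    measurable_softmax_p[OF assms(2), unfolded case_prod_beta']
  show ?thesis unfolding dis_loss_def cross_entropy_def case_prod_beta' by measurable
qed

lemma
  assumes "task_distribution M \<mu> D"
  shows prob_space_sampling: "prob_space (sampling M \<mu> D k)"
    and sets_sampling: "sets (sampling M \<mu> D k) = sets (sample_space M k)"
proof -
  define K where "K = (\<lambda>(cp, cn). (D cp \<Otimes>\<^sub>M D cp) \<Otimes>\<^sub>M (\<Pi>\<^sub>M i\<in>{..<k}. D (cn i)))"
  define P where "P = pair_pmf \<mu> (Pi_pmf {..<k} undefined (\<lambda>_. \<mu>))"
  have sampling: "sampling M \<mu> D k = measure_pmf P \<bind> K"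
    unfolding sampling_def K_def P_def ..
  have K_prob: "prob_space (K z)" for z
    using assms unfolding K_def task_distribution_def case_prod_beta'
    by (intro prob_space_pair prob_space_PiM) auto
  have "sets (K z) = sets (sample_space M k)" for z
    using assms unfolding K_def sample_space_def task_distribution_def case_prod_beta'
    by (intro sets_pair_measure_cong sets_PiM_cong) auto
  then have "K \<in> count_space UNIV \<rightarrow>\<^sub>M subprob_algebra (sample_space M k)"
    using K_prob by (auto simp: space_subprob_algebra prob_space_imp_subprob_space)
  then have K: "K \<in> measure_pmf P \<rightarrow>\<^sub>M subprob_algebra (sample_space M k)"
    by (simp cong: measurable_cong_sets)
  show "prob_space (sampling M \<mu> D k)"
    unfolding sampling using K_prob
    by (intro prob_space.prob_space_bind[OF prob_space_measure_pmf _ K]) simp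
  show "sets (sampling M \<mu> D k) = sets (sample_space M k)"
    unfolding sampling by (rule sets_bind_measurable[OF K]) simp
qed

lemma integrable_sampling_bounded:
  fixes F :: "('x \<times> 'x) \<times> (nat \<Rightarrow> 'x) \<Rightarrow> real"
  assumes "task_distribution M \<mu> D" and "F \<in> borel_measurable (sample_space M k)"
    and "\<And>\<omega>. \<omega> \<in> space (sample_space M k) \<Longrightarrow> \<bar>F \<omega>\<bar> \<le> B"
  shows "integrable (sampling M \<mu> D k) F"
proof -
  interpret prob_space "sampling M \<mu> D k" by (rule prob_space_sampling[OF assms(1)])
  note sets = sets_sampling[OF assms(1)]
  show ?thesis
    using assms(2,3) sets_eq_imp_space_eq[OF sets]
    by (intro integrable_const_bound[where B=B]) (auto simp: measurable_cong_sets[OF sets refl])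
qed

lemma (in prob_space) expectation_affine_sandwich:
  fixes F G H :: "'a \<Rightarrow> real"
  assumes "integrable M F" "integrable M G" "integrable M H"
    and "\<And>\<omega>. \<omega> \<in> space M \<Longrightarrow> F \<omega> \<le> \<alpha> * G \<omega> + H \<omega> + c"
    and "\<And>\<omega>. \<omega> \<in> space M \<Longrightarrow> \<alpha> * G \<omega> + H \<omega> + c' \<le> F \<omega>"
  shows "expectation F \<le> \<alpha> * expectation G + expectation H + c
    \<and> \<alpha> * expectation G + expectation H + c' \<le> expectation F"
proof -
  have affine: "expectation (\<lambda>\<omega>. \<alpha> * G \<omega> + H \<omega> + d) = \<alpha> * expectation G + expectation H + d" for d
    using assms(2,3) by (simp add: prob_space)
  show ?thesis
    using integral_mono[OF assms(1) _ assms(4)] integral_mono[OF _ assms(1) assms(5)] assms(2,3)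
    unfolding affine by simp
qed

theorem mainTheorem5:
  fixes M :: "'x measure" and \<mu> :: "'c pmf" and D :: "'c \<Rightarrow> 'x measure"
    and g h :: "'x \<Rightarrow> real ^ 'd" and k :: nat
  assumes "k \<ge> 1"
    and "encoder M g" and "encoder M h"
    and "task_distribution M \<mu> D"
  defines "\<alpha> \<equiv> 2 * exp 2 / (real k + exp 2)"
  defines "\<beta> \<equiv> 2 - \<alpha> + \<alpha> * ln (\<alpha> / 2)"
  defines "\<beta>' \<equiv> - \<alpha> * ln (1 + real k * exp 2) - 2 * real k * exp 2 / (1 + real k * exp 2)"
  shows "L_con M \<mu> D k g \<le> \<alpha> * L_con M \<mu> D k h + L_dis M \<mu> D k g h + \<beta>
       \<and> L_con M \<mu> D k g \<ge> \<alpha> * L_con M \<mu> D k h + L_dis M \<mu> D k g h + \<beta>'"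
proof -
  interpret prob_space "sampling M \<mu> D k" by (rule prob_space_sampling[OF assms(4)])
  have space: "space (sampling M \<mu> D k) = space (sample_space M k)"
    by (rule sets_eq_imp_space_eq[OF sets_sampling[OF assms(4)]])
  have "0 < \<alpha>" unfolding \<alpha>_def by (simp add: add_nonneg_pos)
  have measurable: "g \<in> M \<rightarrow>\<^sub>M borel" "h \<in> M \<rightarrow>\<^sub>M borel"
    using assms(2,3) unfolding encoder_def by auto
  have "integrable (sampling M \<mu> D k) (con_loss k f)" if "encoder M f" "f \<in> M \<rightarrow>\<^sub>M borel" for f
    by (intro integrable_sampling_bounded[OF assms(4), where B="ln (1 + real k * exp 2)"]
        measurable_con_loss abs_con_loss_le[OF that(1)] that(2))
  moreover have "integrable (sampling M \<mu> D k) (dis_loss k g h)"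
    by (intro integrable_sampling_bounded[OF assms(4), where B="ln (1 + real k * exp 2) + 2"]
        measurable_dis_loss abs_dis_loss_le[OF assms(2)] measurable)
  ultimately show ?thesis
    unfolding L_con_eq_integral_con_loss L_dis_eq_integral_dis_loss \<beta>_def \<beta>'_def
    using con_loss_sandwich[OF assms(2,3) _ \<open>0 < \<alpha>\<close>] assms(2,3) measurable
    by (intro expectation_affine_sandwich) (auto simp: space)
qed

end
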